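(* Let $K\subset\mathbb{C}$ be compact and polynomially convex, and let $(q_k)_k$ be a sequence of polynomials with $\deg q_k = n_k\to\infty$. If $(q_k)_k$ centers on $K$, then for every $m=1,2,\ldots$ the sequence of $m$th derivatives $(q_k^{(m)})_k$ also centers on $K$.
   Context: Definition (centering): Let $C\subset\mathbb{C}$ be non-empty and compact and let $(q_k)_k$ be a sequence of polynomials. We say $(q_k)_k$ centers on $C$ if there exist $R>0$ and $k_0$ such that (1) all zeros of $q_k$ lie in the disk $\mathbb{D}(0,R)=\{|z|<R\}$ for all $k\ge k_0$ (in particular $q_k$ is not the zero polynomial for $k\ge k_0$); (2) for every closed $L\subset\mathbb{C}$ with $L\cap C=\emptyset$ there is $M=M(L)$ such that the number of zeros of $q_k$ in $L$, counted with multiplicity, is at most $M$ for all $k\ge k_0$. *)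

theory Defs
  imports "HOL-Analysis.Analysis" "HOL-Computational_Algebra.Polynomial"
begin

definition poly_hull :: "complex set \<Rightarrow> complex set" where
  "poly_hull K = {z. \<forall>p :: complex poly. cmod (poly p z) \<le> (SUP w\<in>K. cmod (poly p w))}"

definition polynomially_convex :: "complex set \<Rightarrow> bool" where
  "polynomially_convex K \<longleftrightarrow> poly_hull K = K"

definition zero_count :: "complex poly \<Rightarrow> complex set \<Rightarrow> nat" where
  "zero_count q L = (\<Sum>z\<in>{z\<in>L. poly q z = 0}. order z q)"

definition centers_on :: "(nat \<Rightarrow> complex poly) \<Rightarrow> complex set \<Rightarrow> bool" where
  "centers_on q C \<longleftrightarrow>
     (\<exists>R>0. \<exists>k0. (\<forall>k\<ge>k0. q k \<noteq> 0 \<and> (\<forall>z. poly (q k) z = 0 \<longrightarrow> cmod z < R)) \<and>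
        (\<forall>L. closed L \<and> L \<inter> C = {} \<longrightarrow> (\<exists>M. \<forall>k\<ge>k0. zero_count (q k) L \<le> M)))"

end

theory Submission
  imports Defs "HOL-Complex_Analysis.Great_Picard" "HOL-Computational_Algebra.Fundamental_Theorem_Algebra"
begin

text \<open>Zeros of \<open>q'\<close> lie in every disc about the origin that contains the zeros of \<open>q\<close>
  (Gauss--Lucas). For the counting condition fix a closed \<open>L\<close> disjoint from \<open>K\<close> and divide
  \<open>q\<^sub>k'\<close> by \<open>n\<^sub>k\<close> times the factor of \<open>q\<^sub>k\<close> carrying its zeros within \<open>\<delta>\<close> of \<open>K\<close>. Since only
  boundedly many zeros of \<open>q\<^sub>k\<close> lie farther out, these quotients are locally uniformly bounded
  on a connected open set \<open>W\<close> that contains the relevant part of \<open>L\<close> and a far point \<open>z\<close>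
  and keeps away from \<open>K\<close>; such a \<open>W\<close> exists because the complement of a polynomially
  convex set is connected. At \<open>z\<close> the quotients are bounded below, so by Montel's theorem a
  subsequence converges to a holomorphic function that does not vanish identically, and a
  maximum modulus estimate bounds the number of zeros in \<open>L\<close> along it. If the counts were
  unbounded, this would fail for a subsequence along which they tend to infinity.
  Iterating gives the higher derivatives.\<close>

definition poly_of_roots :: "complex list \<Rightarrow> complex poly" where
  "poly_of_roots xs = (\<Prod>x\<leftarrow>xs. [:-x, 1:])"

lemma poly_of_roots_Nil [simp]: "poly_of_roots [] = 1"
  by (simp add: poly_of_roots_def)

lemma poly_of_roots_Cons [simp]: "poly_of_roots (x # xs) = [:-x, 1:] * poly_of_roots xs"
  by (simp add: poly_of_roots_def)

declare mult_pCons_left [simp del]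

lemma poly_of_roots_eq_0_iff: "poly (poly_of_roots xs) z = 0 \<longleftrightarrow> z \<in> set xs"
  by (induction xs) auto

lemma poly_of_roots_filter:
  "poly_of_roots xs = poly_of_roots (filter P xs) * poly_of_roots (filter (\<lambda>x. \<not> P x) xs)"
  by (induction xs) (auto simp: mult_ac)

lemma poly_pderiv_poly_of_roots:
  assumes "poly (poly_of_roots xs) z \<noteq> 0"
  shows "poly (pderiv (poly_of_roots xs)) z = poly (poly_of_roots xs) z * (\<Sum>x\<leftarrow>xs. 1 / (z - x))"
  using assms
proof (induction xs)
  case (Cons a xs)
  have za: "z - a \<noteq> 0" and nz: "poly (poly_of_roots xs) z \<noteq> 0"
    using Cons.prems by auto
  have "poly (pderiv (poly_of_roots (a # xs))) z
      = poly (poly_of_roots xs) z + (z - a) * poly (pderiv (poly_of_roots xs)) z"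
    by (simp add: pderiv_mult pderiv_pCons)
  also have "\<dots> = (z - a) * poly (poly_of_roots xs) z * (1 / (z - a) + (\<Sum>x\<leftarrow>xs. 1 / (z - x)))"
    using Cons.IH[OF nz] za by (simp add: field_simps)
  finally show ?case
    by simp
qed simp

lemma norm_poly_of_roots_le:
  assumes "\<And>x. x \<in> set xs \<Longrightarrow> cmod (z - x) \<le> B"
  shows "cmod (poly (poly_of_roots xs) z) \<le> B ^ length xs"
  using assms
proof (induction xs)
  case (Cons a xs)
  have "0 \<le> B"
    using Cons.prems[of a] norm_ge_zero[of "z - a"] by (meson list.set_intros(1) order_trans)
  with Cons show ?case
    by (auto simp: norm_mult intro: mult_mono)
qed simp

lemma norm_poly_of_roots_ge:
  assumes "\<And>x. x \<in> set xs \<Longrightarrow> b \<le> cmod (z - x)" and "0 \<le> b"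
  shows "b ^ length xs \<le> cmod (poly (poly_of_roots xs) z)"
  using assms
proof (induction xs)
  case (Cons a xs)
  have "b * b ^ length xs \<le> cmod (z - a) * cmod (poly (poly_of_roots xs) z)"
    using Cons by (intro mult_mono) auto
  then show ?case
    by (simp add: norm_mult)
qed simp

lemma norm_pderiv_poly_of_roots_le:
  fixes B :: real
  assumes "\<And>x. x \<in> set xs \<Longrightarrow> cmod (z - x) \<le> B" and "1 \<le> B"
  shows "cmod (poly (pderiv (poly_of_roots xs)) z) \<le> length xs * B ^ length xs"
  using assms
proof (induction xs)
  case (Cons a xs)
  have "poly (pderiv (poly_of_roots (a # xs))) z
      = poly (poly_of_roots xs) z + (z - a) * poly (pderiv (poly_of_roots xs)) z"
    by (simp add: pderiv_mult pderiv_pCons)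
  then have "cmod (poly (pderiv (poly_of_roots (a # xs))) z)
      \<le> cmod (poly (poly_of_roots xs) z) + cmod (z - a) * cmod (poly (pderiv (poly_of_roots xs)) z)"
    by (metis norm_mult norm_triangle_ineq)
  also have "\<dots> \<le> B ^ length xs + B * (length xs * B ^ length xs)"
    using Cons norm_poly_of_roots_le[of xs z B] by (intro add_mono mult_mono) auto
  also have "\<dots> \<le> B * B ^ length xs + B * (length xs * B ^ length xs)"
    using Cons.prems by simp
  finally show ?case
    by (simp add: algebra_simps)
qed simp

lemma norm_sum_list_le:
  fixes f :: "'a \<Rightarrow> 'b::real_normed_vector" and b :: real
  assumes "\<And>x. x \<in> set xs \<Longrightarrow> norm (f x) \<le> b"
  shows "norm (\<Sum>x\<leftarrow>xs. f x) \<le> length xs * b"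
  using assms
proof (induction xs)
  case (Cons a xs)
  have "norm (\<Sum>x\<leftarrow>a # xs. f x) \<le> norm (f a) + norm (\<Sum>x\<leftarrow>xs. f x)"
    by (simp add: norm_triangle_ineq)
  also have "\<dots> \<le> b + length xs * b"
    using Cons by (intro add_mono) auto
  finally show ?case
    by (simp add: algebra_simps)
qed simp

definition root_list :: "complex poly \<Rightarrow> complex list" where
  "root_list p = (SOME xs. mset xs = proots p)"

lemma mset_root_list: "mset (root_list p) = proots p"
  unfolding root_list_def by (rule someI_ex) (rule ex_mset)

lemma poly_of_root_list: "p = smult (lead_coeff p) (poly_of_roots (root_list p))"
  using complex_poly_decompose_multiset[of p]
  by (simp add: poly_of_roots_def prod_mset_prod_list[symmetric] mset_root_list)

lemma length_root_list: "length (root_list p) = degree p"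
  by (metis mset_root_list size_mset size_proots_complex)

lemma set_root_list: "p \<noteq> 0 \<Longrightarrow> set (root_list p) = {z. poly p z = 0}"
  by (metis mset_root_list set_mset_mset set_count_proots)

lemma zero_count_eq_length_filter:
  assumes "p \<noteq> 0"
  shows "zero_count p L = length (filter (\<lambda>x. x \<in> L) (root_list p))"
proof -
  have "zero_count p L = (\<Sum>z\<in>{z\<in>L. poly p z = 0}. count_list (filter (\<lambda>x. x \<in> L) (root_list p)) z)"
    unfolding zero_count_def
  proof (intro sum.cong refl)
    fix z assume "z \<in> {z\<in>L. poly p z = 0}"
    then show "order z p = count_list (filter (\<lambda>x. x \<in> L) (root_list p)) z"
      using assms by (simp add: count_mset[symmetric] mset_root_list)
  qed
  also have "\<dots> = length (filter (\<lambda>x. x \<in> L) (root_list p))"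
    using set_root_list[OF assms] poly_roots_finite[OF assms]
    by (intro sum_count_set) auto
  finally show ?thesis .
qed

lemma zero_count_mono:
  assumes "p \<noteq> 0" and "S \<subseteq> T"
  shows "zero_count p S \<le> zero_count p T"
  unfolding zero_count_def using assms poly_roots_finite[OF assms(1)]
  by (intro sum_mono2) auto

lemma zero_count_UN_le:
  assumes "p \<noteq> 0" and "finite A"
  shows "zero_count p (\<Union>a\<in>A. B a) \<le> (\<Sum>a\<in>A. zero_count p (B a))"
  using assms(2)
proof (induction A rule: finite_induct)
  case (insert a A)
  let ?roots = "\<lambda>S. {z\<in>S. poly p z = 0}"
  have fin: "finite (?roots S)" for S
    using poly_roots_finite[OF assms(1)] by simp
  have split: "?roots (B a \<union> (\<Union>a\<in>A. B a)) = ?roots (B a) \<union> ?roots (\<Union>a\<in>A. B a)"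
    by auto
  have "zero_count p (B a \<union> (\<Union>a\<in>A. B a)) \<le> zero_count p (B a) + zero_count p (\<Union>a\<in>A. B a)"
    unfolding zero_count_def split sum_Un_nat[OF fin fin] by (rule diff_le_self)
  with insert show ?case
    by simp
qed (simp add: zero_count_def)

lemma poly_pderiv_eq_sum_root_list:
  assumes "poly p z \<noteq> 0"
  shows "poly (pderiv p) z = poly p z * (\<Sum>x\<leftarrow>root_list p. 1 / (z - x))"
proof -
  have "poly (poly_of_roots (root_list p)) z \<noteq> 0"
    using assms poly_of_root_list[of p] by (metis mult_zero_right poly_smult)
  then show ?thesis
    using poly_pderiv_poly_of_roots poly_of_root_list[of p]
    by (metis mult.assoc pderiv_smult poly_smult)
qed

lemma Re_divide_diff_pos:
  fixes z x :: complex
  assumes "cmod x < cmod z"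
  shows "0 < Re (z / (z - x))"
proof -
  have "Re (z * cnj x) \<le> cmod z * cmod x"
    using complex_Re_le_cmod[of "z * cnj x"] by (simp add: norm_mult)
  also have "\<dots> < cmod z * cmod z"
    using assms by (intro mult_strict_left_mono) auto
  also have "\<dots> = Re (z * cnj z)"
    by (simp add: complex_mult_cnj cmod_def power2_eq_square)
  finally have "0 < Re (z * cnj (z - x))"
    by (simp add: algebra_simps)
  moreover have "z - x \<noteq> 0"
    using assms by auto
  moreover have "Re (z / (z - x)) = Re (z * cnj (z - x)) / (cmod (z - x))\<^sup>2"
    by (subst complex_div_cnj) (simp add: Re_divide_of_real)
  ultimately show ?thesis
    by simp
qed

lemma Re_divide_diff_ge_half:
  fixes z x :: complex
  assumes "cmod x < R" and "3 * R \<le> cmod z"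
  shows "1 / 2 \<le> Re (z / (z - x))"
proof -
  have R: "0 < R"
    using assms(1) norm_ge_zero[of x] by linarith
  have d: "2 * R \<le> cmod (z - x)"
    using assms norm_triangle_ineq2[of z x] by linarith
  then have "z - x \<noteq> 0"
    using R by auto
  then have "z / (z - x) = 1 + x / (z - x)"
    by (simp add: field_simps)
  moreover have "cmod (x / (z - x)) \<le> R / (2 * R)"
    unfolding norm_divide using d R assms(1) by (intro frac_le) auto
  moreover have "- cmod (x / (z - x)) \<le> Re (x / (z - x))"
    using abs_Re_le_cmod[of "x / (z - x)"] by linarith
  ultimately show ?thesis
    using R by simp
qed

lemma Re_mult_sum_inverse_pos:
  fixes z :: complex
  assumes "\<And>x. x \<in> set xs \<Longrightarrow> cmod x < cmod z" and "xs \<noteq> []"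
  shows "0 < Re (z * (\<Sum>x\<leftarrow>xs. 1 / (z - x)))"
  using assms
proof (induction xs)
  case (Cons a xs)
  have "0 < Re (z / (z - a))"
    using Cons.prems by (intro Re_divide_diff_pos) auto
  moreover have "0 \<le> Re (z * (\<Sum>x\<leftarrow>xs. 1 / (z - x)))"
    using Cons by (cases "xs = []") auto
  ultimately show ?case
    by (simp add: distrib_left)
qed simp

lemma norm_sum_inverse_ge:
  fixes z :: complex
  assumes "\<And>x. x \<in> set xs \<Longrightarrow> cmod x < R" and "3 * R \<le> cmod z" and "0 < R"
  shows "length xs / (2 * cmod z) \<le> cmod (\<Sum>x\<leftarrow>xs. 1 / (z - x))"
proof -
  have "length xs / 2 \<le> Re (z * (\<Sum>x\<leftarrow>xs. 1 / (z - x)))"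
    using assms(1)
  proof (induction xs)
    case (Cons a xs)
    have "1 / 2 \<le> Re (z / (z - a))"
      using Cons.prems assms(2) by (intro Re_divide_diff_ge_half) auto
    with Cons show ?case
      by (simp add: distrib_left)
  qed simp
  also have "\<dots> \<le> cmod z * cmod (\<Sum>x\<leftarrow>xs. 1 / (z - x))"
    using complex_Re_le_cmod by (metis norm_mult)
  moreover have "0 < cmod z"
    using assms by linarith
  ultimately show ?thesis
    by (simp add: field_simps)
qed

lemma roots_bound_pos:
  assumes "1 \<le> degree p" and "\<And>x. poly p x = 0 \<Longrightarrow> cmod x < R"
  shows "0 < R"
proof -
  obtain x where "x \<in> set (root_list p)"
    using assms(1) length_root_list[of p] by (cases "root_list p") auto
  moreover have "p \<noteq> 0"
    using assms(1) by auto
  ultimately have "cmod x < R"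
    using assms(2) set_root_list[of p] by blast
  then show ?thesis
    using norm_ge_zero[of x] by linarith
qed

lemma pderiv_zero_in_ball:
  fixes p :: "complex poly"
  assumes "1 \<le> degree p" and roots: "\<And>x. poly p x = 0 \<Longrightarrow> cmod x < R"
    and "poly (pderiv p) z = 0"
  shows "cmod z < R"
proof (rule ccontr)
  assume "\<not> cmod z < R"
  then have far: "\<And>x. x \<in> set (root_list p) \<Longrightarrow> cmod x < cmod z"
    using roots set_root_list[of p] assms(1) by fastforce
  have "poly p z \<noteq> 0"
    using roots \<open>\<not> cmod z < R\<close> by blast
  moreover have "root_list p \<noteq> []"
    using assms(1) length_root_list[of p] by auto
  then have "(\<Sum>x\<leftarrow>root_list p. 1 / (z - x)) \<noteq> 0"
    using Re_mult_sum_inverse_pos[OF far] by fastforce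
  ultimately show False
    using assms(3) poly_pderiv_eq_sum_root_list by simp
qed

text \<open>Each zero in \<open>cball a r\<close> contributes a factor of modulus at least \<open>2 r\<close> on the
  sphere but at most \<open>3 r / 2\<close> at \<open>z0\<close>; the maximum modulus principle handles the rest.\<close>

lemma norm_le_power_zero_count:
  fixes p :: "complex poly" and h :: "complex \<Rightarrow> complex"
  assumes p: "p \<noteq> 0" and hol: "h holomorphic_on cball a (3 * r)" and r: "0 < r"
    and bnd: "\<And>z. z \<in> sphere a (3 * r) \<Longrightarrow> cmod (poly p z * h z) \<le> B"
    and z0: "z0 \<in> cball a (r / 2)"
  shows "cmod (poly p z0 * h z0) \<le> B * (3 / 4) ^ zero_count p (cball a r)"
proof -
  define D where "D = filter (\<lambda>x. x \<in> cball a r) (root_list p)"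
  define E where "E = filter (\<lambda>x. x \<notin> cball a r) (root_list p)"
  define N where "N = length D"
  define G where "G = (\<lambda>z. lead_coeff p * poly (poly_of_roots E) z * h z)"
  have N: "N = zero_count p (cball a r)"
    by (simp add: N_def D_def zero_count_eq_length_filter[OF p])
  have split: "poly p z * h z = poly (poly_of_roots D) z * G z" for z
  proof -
    have "p = smult (lead_coeff p) (poly_of_roots D * poly_of_roots E)"
      using poly_of_root_list[of p] poly_of_roots_filter[of _ "\<lambda>x. x \<in> cball a r"]
      unfolding D_def E_def by metis
    then have "poly p z = lead_coeff p * (poly (poly_of_roots D) z * poly (poly_of_roots E) z)"
      by (metis poly_mult poly_smult)
    then show ?thesis
      by (simp add: G_def)
  qed
  have G_sphere: "cmod (G z) \<le> B / (2 * r) ^ N" if z: "z \<in> sphere a (3 * r)" for z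
  proof -
    have "(2 * r) ^ N \<le> cmod (poly (poly_of_roots D) z)"
      unfolding N_def
    proof (rule norm_poly_of_roots_ge)
      fix x assume "x \<in> set D"
      then have "dist a x \<le> r"
        by (simp add: D_def)
      then show "2 * r \<le> cmod (z - x)"
        using z dist_triangle[of a z x] by (simp add: dist_norm norm_minus_commute)
    qed (use r in auto)
    then have "(2 * r) ^ N * cmod (G z) \<le> cmod (poly p z * h z)"
      unfolding split norm_mult by (intro mult_right_mono) auto
    with bnd[OF z] r show ?thesis
      by (simp add: field_simps)
  qed
  have G_hol: "G holomorphic_on cball a (3 * r)"
    unfolding G_def using hol by (intro holomorphic_intros)
  have "G holomorphic_on interior (ball a (3 * r))"
    using G_hol by (simp add: holomorphic_on_subset)
  moreover have "continuous_on (closure (ball a (3 * r))) G"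
    using G_hol r by (simp add: holomorphic_on_imp_continuous_on)
  moreover have "z0 \<in> ball a (3 * r)"
    using z0 r by auto
  ultimately have G_z0: "cmod (G z0) \<le> B / (2 * r) ^ N"
    using maximum_modulus_frontier[where S = "ball a (3 * r)"] r G_sphere by auto
  have D_z0: "cmod (poly (poly_of_roots D) z0) \<le> (3 * r / 2) ^ N"
    unfolding N_def
  proof (rule norm_poly_of_roots_le)
    fix x assume "x \<in> set D"
    then have "dist a x \<le> r"
      by (simp add: D_def)
    then show "cmod (z0 - x) \<le> 3 * r / 2"
      using z0 dist_triangle3[of z0 x a] by (simp add: dist_norm)
  qed
  have "cmod (poly p z0 * h z0) \<le> (3 * r / 2) ^ N * (B / (2 * r) ^ N)"
    unfolding split norm_mult using D_z0 G_z0 r by (intro mult_mono) auto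
  also have "\<dots> = B * ((3 * r / 2) / (2 * r)) ^ N"
    by (metis power_divide times_divide_eq_right mult.commute)
  also have "(3 * r / 2) / (2 * r) = 3 / 4"
    using r by simp
  finally show ?thesis
    by (simp add: N)
qed

lemma eventually_zero_count_cball_bounded:
  fixes p :: "nat \<Rightarrow> complex poly" and h :: "nat \<Rightarrow> complex \<Rightarrow> complex"
  assumes p: "\<And>i. p i \<noteq> 0" and hol: "\<And>i. h i holomorphic_on cball a (3 * r)" and r: "0 < r"
    and bnd: "\<And>i z. z \<in> sphere a (3 * r) \<Longrightarrow> cmod (poly (p i) z * h i z) \<le> B"
    and z0: "z0 \<in> cball a (r / 2)"
    and lim: "(\<lambda>i. poly (p i) z0 * h i z0) \<longlonglongrightarrow> g" and g: "g \<noteq> 0"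
  shows "\<exists>N. eventually (\<lambda>i. zero_count (p i) (cball a r) \<le> N) sequentially"
proof -
  have "a + of_real (3 * r) \<in> sphere a (3 * r)"
    using r by (simp add: dist_norm)
  from bnd[OF this] have B: "0 \<le> B"
    by (meson norm_ge_zero order_trans)
  have "(\<lambda>n. B * (3 / 4 :: real) ^ n) \<longlonglongrightarrow> 0"
    by (intro tendsto_mult_right_zero LIMSEQ_power_zero) simp
  then have "eventually (\<lambda>n. B * (3 / 4) ^ n < cmod g / 2) sequentially"
    using g by (intro order_tendstoD) auto
  then obtain N where N: "B * (3 / 4) ^ N < cmod g / 2"
    by (auto simp: eventually_sequentially)
  have "eventually (\<lambda>i. cmod g / 2 < cmod (poly (p i) z0 * h i z0)) sequentially"
    using tendsto_norm[OF lim] g by (intro order_tendstoD) auto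
  then have "eventually (\<lambda>i. zero_count (p i) (cball a r) \<le> N) sequentially"
  proof (rule eventually_mono)
    fix i
    assume large: "cmod g / 2 < cmod (poly (p i) z0 * h i z0)"
    show "zero_count (p i) (cball a r) \<le> N"
    proof (rule ccontr)
      assume "\<not> zero_count (p i) (cball a r) \<le> N"
      then have "B * (3 / 4) ^ zero_count (p i) (cball a r) \<le> B * (3 / 4) ^ N"
        using B by (intro mult_left_mono power_decreasing) auto
      then have "cmod (poly (p i) z0 * h i z0) < cmod g / 2"
        using norm_le_power_zero_count[OF p[of i] hol[of i] r bnd z0] N by linarith
      with large show False
        by simp
    qed
  qed
  then show ?thesis ..
qed

lemma holomorphic_nonzero_in_ball:
  assumes "G holomorphic_on W" "open W" "connected W" "z \<in> W" "G z \<noteq> 0"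
    and "0 < \<rho>" "ball a \<rho> \<subseteq> W"
  shows "\<exists>w\<in>ball a \<rho>. G w \<noteq> 0"
proof (rule ccontr)
  assume zero: "\<not> (\<exists>w\<in>ball a \<rho>. G w \<noteq> 0)"
  have "G z = 0"
    by (rule analytic_continuation_open[where s = "ball a \<rho>" and f = G and g = "\<lambda>_. 0"])
      (use assms zero in auto)
  with assms(5) show False ..
qed

lemma frequently_if_eventually_subseq:
  assumes "strict_mono r" and "eventually (\<lambda>n. P (r n)) sequentially"
  shows "frequently P sequentially"
  unfolding frequently_sequentially
proof
  fix m
  obtain n0 where "\<And>n. n \<ge> n0 \<Longrightarrow> P (r n)"
    using assms(2) by (auto simp: eventually_sequentially)
  then show "\<exists>i\<ge>m. P i"
    using seq_suble[OF assms(1), of "max m n0"] by (intro exI[of _ "r (max m n0)"]) auto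
qed

lemma eventually_zero_count_near_point_bounded:
  fixes p :: "nat \<Rightarrow> complex poly" and h :: "nat \<Rightarrow> complex \<Rightarrow> complex"
  assumes W: "open W" "connected W" and a: "a \<in> W" and z: "z \<in> W"
    and p: "\<And>i. p i \<noteq> 0" and hol: "\<And>i. h i holomorphic_on W"
    and bnd: "\<And>C. compact C \<Longrightarrow> C \<subseteq> W \<Longrightarrow> \<exists>B. \<forall>i. \<forall>w\<in>C. cmod (poly (p i) w * h i w) \<le> B"
    and lim: "\<And>w. w \<in> W \<Longrightarrow> (\<lambda>i. poly (p i) w * h i w) \<longlonglongrightarrow> G w"
    and G: "G holomorphic_on W" "G z \<noteq> 0"
  shows "\<exists>\<rho>>0. \<exists>N. eventually (\<lambda>i. zero_count (p i) (cball a \<rho>) \<le> N) sequentially"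
proof -
  obtain e where e: "0 < e" "ball a e \<subseteq> W"
    using W(1) a open_contains_ball by blast
  define \<rho> where "\<rho> = e / 4"
  have \<rho>: "0 < \<rho>" "cball a (3 * \<rho>) \<subseteq> W"
    using e by (auto simp: \<rho>_def)
  have "ball a (\<rho> / 2) \<subseteq> W"
    using \<rho> by (auto simp: subset_iff)
  then obtain w where w: "w \<in> ball a (\<rho> / 2)" "G w \<noteq> 0"
    using holomorphic_nonzero_in_ball[OF G(1) W z G(2)] \<rho>(1) by (metis half_gt_zero)
  have "sphere a (3 * \<rho>) \<subseteq> W"
    using \<rho>(2) sphere_cball by blast
  then obtain B where B: "\<forall>i. \<forall>u\<in>sphere a (3 * \<rho>). cmod (poly (p i) u * h i u) \<le> B"
    using bnd[OF compact_sphere] by blast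
  have "\<exists>N. eventually (\<lambda>i. zero_count (p i) (cball a \<rho>) \<le> N) sequentially"
  proof (rule eventually_zero_count_cball_bounded)
    show "h i holomorphic_on cball a (3 * \<rho>)" for i
      using hol \<rho>(2) by (rule holomorphic_on_subset)
    have "w \<in> W"
      using w(1) \<rho> by (auto simp: subset_iff)
    then show "(\<lambda>i. poly (p i) w * h i w) \<longlonglongrightarrow> G w"
      by (rule lim)
    show "w \<in> cball a (\<rho> / 2)"
      using w(1) by simp
  qed (use p \<rho>(1) B w(2) in blast)+
  with \<rho> show ?thesis
    by blast
qed

text \<open>By Montel's theorem a subsequence of \<open>p i * h i\<close> converges
  to a holomorphic limit, which cannot vanish identically because of the lower bound at \<open>z\<close>;
  near every point of \<open>L\<close> it is then nonzero close by, so zeros cannot accumulate there.\<close>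

lemma frequently_zero_count_bounded:
  fixes p :: "nat \<Rightarrow> complex poly" and h :: "nat \<Rightarrow> complex \<Rightarrow> complex"
  assumes W: "open W" "connected W" and L: "compact L" "L \<subseteq> W" and z: "z \<in> W"
    and p: "\<And>i. p i \<noteq> 0" and hol: "\<And>i. h i holomorphic_on W"
    and bnd: "\<And>C. compact C \<Longrightarrow> C \<subseteq> W \<Longrightarrow> \<exists>B. \<forall>i. \<forall>w\<in>C. cmod (poly (p i) w * h i w) \<le> B"
    and low: "\<And>i. c \<le> cmod (poly (p i) z * h i z)" and c: "0 < c"
  shows "\<exists>M. \<exists>\<^sub>F i in sequentially. zero_count (p i) L \<le> M"
proof -
  define f where "f i w = poly (p i) w * h i w" for i w
  have f_hol: "f i holomorphic_on W" for i
    unfolding f_def using hol by (intro holomorphic_intros)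
  have range_hol: "g holomorphic_on W" if "g \<in> range f" for g
    using f_hol that by blast
  have range_bnd: "\<exists>B. \<forall>g\<in>range f. \<forall>w\<in>C. norm (g w) \<le> B" if "compact C" "C \<subseteq> W" for C
    using bnd[OF that] unfolding f_def by blast
  obtain G r where G: "G holomorphic_on W" and r: "strict_mono r"
    and lim: "\<And>w. w \<in> W \<Longrightarrow> (\<lambda>n. f (r n) w) \<longlonglongrightarrow> G w"
    using Montel[OF W(1) range_hol range_bnd order_refl] by metis
  have "c \<le> cmod (G z)"
    using tendsto_norm[OF lim[OF z]] low unfolding f_def by (intro Lim_bounded2) auto
  then have Gz: "G z \<noteq> 0"
    using c by auto
  have "\<exists>\<rho>>0. \<exists>N. eventually (\<lambda>n. zero_count (p (r n)) (cball a \<rho>) \<le> N) sequentially"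
    if "a \<in> L" for a
  proof (rule eventually_zero_count_near_point_bounded[OF W _ z _ _ _ _ G Gz])
    show "a \<in> W"
      using that L(2) by blast
    show "\<exists>B. \<forall>n. \<forall>w\<in>C. cmod (poly (p (r n)) w * h (r n) w) \<le> B"
      if "compact C" "C \<subseteq> W" for C
      using bnd[OF that] by blast
    show "(\<lambda>n. poly (p (r n)) w * h (r n) w) \<longlonglongrightarrow> G w" if "w \<in> W" for w
      using lim[OF that] by (simp add: f_def)
  qed (use p hol in blast)+
  then obtain \<rho> N where \<rho>: "\<And>a. a \<in> L \<Longrightarrow> 0 < \<rho> a"
    and N: "\<And>a. a \<in> L \<Longrightarrow> eventually (\<lambda>n. zero_count (p (r n)) (cball a (\<rho> a)) \<le> N a) sequentially"
    by metis
  have "L \<subseteq> (\<Union>a\<in>L. ball a (\<rho> a))"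
    using \<rho> by force
  then obtain A where A: "A \<subseteq> L" "finite A" "L \<subseteq> (\<Union>a\<in>A. ball a (\<rho> a))"
    by (rule compactE_image[OF L(1) open_ball])
  have "eventually (\<lambda>n. \<forall>a\<in>A. zero_count (p (r n)) (cball a (\<rho> a)) \<le> N a) sequentially"
    using A N by (intro eventually_ball_finite) auto
  then have "eventually (\<lambda>n. zero_count (p (r n)) L \<le> (\<Sum>a\<in>A. N a)) sequentially"
  proof (rule eventually_mono)
    fix n
    assume n: "\<forall>a\<in>A. zero_count (p (r n)) (cball a (\<rho> a)) \<le> N a"
    have "L \<subseteq> (\<Union>a\<in>A. cball a (\<rho> a))"
      using A(3) ball_subset_cball by blast
    then have "zero_count (p (r n)) L \<le> zero_count (p (r n)) (\<Union>a\<in>A. cball a (\<rho> a))"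
      by (rule zero_count_mono[OF p])
    also have "\<dots> \<le> (\<Sum>a\<in>A. zero_count (p (r n)) (cball a (\<rho> a)))"
      using p A(2) by (rule zero_count_UN_le)
    also have "\<dots> \<le> (\<Sum>a\<in>A. N a)"
      using n by (intro sum_mono) auto
    finally show "zero_count (p (r n)) L \<le> (\<Sum>a\<in>A. N a)" .
  qed
  then have "\<exists>\<^sub>F i in sequentially. zero_count (p i) L \<le> (\<Sum>a\<in>A. N a)"
    by (rule frequently_if_eventually_subseq[OF r])
  then show ?thesis ..
qed

text \<open>A bounded component of the complement would have its frontier in \<open>K\<close>, so by the
  maximum modulus principle it would lie in the polynomial hull of \<open>K\<close>.\<close>

lemma polynomially_convex_inside_empty:
  assumes K: "compact K" and pc: "polynomially_convex K"
  shows "inside K = {}"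
proof (rule ccontr)
  assume "inside K \<noteq> {}"
  then obtain x where x: "x \<notin> K" and bV: "bounded (connected_component_set (-K) x)"
    by (auto simp: inside_def)
  define V where "V = connected_component_set (-K) x"
  have fr: "frontier V \<subseteq> K"
  proof -
    have "frontier V \<subseteq> frontier (-K)"
      unfolding V_def by (rule frontier_of_connected_component_subset)
    also have "\<dots> \<subseteq> K"
      using K by (simp add: frontier_complement compact_imp_closed frontier_subset_closed)
    finally show ?thesis .
  qed
  have "x \<in> poly_hull K"
    unfolding poly_hull_def
  proof (intro CollectI allI)
    fix p :: "complex poly"
    have "compact ((\<lambda>w. cmod (poly p w)) ` K)"
      using K by (intro compact_continuous_image continuous_intros)
    then have bdd: "bdd_above ((\<lambda>w. cmod (poly p w)) ` K)"
      by (auto intro: bounded_imp_bdd_above compact_imp_bounded)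
    show "cmod (poly p x) \<le> (SUP w\<in>K. cmod (poly p w))"
    proof (rule maximum_modulus_frontier[where S = V and f = "poly p"])
      show "bounded V" "x \<in> V"
        using bV x by (simp_all add: V_def)
      fix z assume "z \<in> frontier V"
      then show "cmod (poly p z) \<le> (SUP w\<in>K. cmod (poly p w))"
        using fr bdd by (intro cSUP_upper) auto
    qed (auto intro: holomorphic_intros continuous_intros)
  qed
  with pc x show False
    by (simp add: polynomially_convex_def)
qed

lemma connected_complement_polynomially_convex:
  assumes "compact K" and "polynomially_convex K"
  shows "connected (- K)"
proof -
  have "- K = outside K"
    using inside_Un_outside[of K] polynomially_convex_inside_empty[OF assms] by simp
  then show ?thesis
    using assms(1) connected_outside[of K] by (simp add: compact_imp_bounded)
qed

text \<open>The components of \<open>{w. 2 \<delta> < infdist w K}\<close> through \<open>z\<close> exhaust the connected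
  set \<open>-K\<close> as \<open>\<delta> \<rightarrow> 0\<close>, so one of them contains the compact set \<open>L\<close>.\<close>

lemma polynomially_convex_connected_nbhd:
  fixes K L :: "complex set"
  assumes K: "compact K" "K \<noteq> {}" and pc: "polynomially_convex K"
    and L: "compact L" "L \<inter> K = {}" and z: "z \<notin> K"
  obtains \<delta> W where "0 < \<delta>" "open W" "connected W" "L \<subseteq> W" "z \<in> W"
    "\<And>w y. w \<in> W \<Longrightarrow> y \<in> K \<Longrightarrow> 2 * \<delta> < dist w y"
proof -
  define C where "C \<delta> = connected_component_set {w. 2 * \<delta> < infdist w K} z" for \<delta>
  have C_open: "open (C \<delta>)" for \<delta>
    unfolding C_def by (intro open_connected_component open_Collect_less continuous_intros)
  have C_antimono: "C \<delta> \<subseteq> C \<delta>'" if "\<delta>' \<le> \<delta>" for \<delta> \<delta>'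
    unfolding C_def using that by (intro connected_component_mono) auto
  have C_dist: "2 * \<delta> < dist w y" if "w \<in> C \<delta>" "y \<in> K" for w y \<delta>
    using that connected_component_subset[of _ z] infdist_le[of y K w] unfolding C_def by fastforce
  have "path_connected (- K)"
    using K(1) connected_complement_polynomially_convex[OF K(1) pc]
    by (intro connected_open_path_connected) (auto simp: compact_imp_closed)
  have exhaust: "\<exists>\<delta>>0. a \<in> C \<delta>" if a: "a \<in> insert z L" for a
  proof -
    have "a \<notin> K"
      using a z L(2) by auto
    then obtain g where g: "path g" "path_image g \<subseteq> - K" "pathstart g = a" "pathfinish g = z"
      using \<open>path_connected (- K)\<close> z unfolding path_connected_def by blast
    then obtain d where d: "0 < d" "\<And>x y. x \<in> path_image g \<Longrightarrow> y \<in> K \<Longrightarrow> d \<le> dist x y"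
      using separate_compact_closed[of "path_image g" K] compact_path_image K(1)
      by (metis compact_imp_closed disjoint_eq_subset_Compl)
    have "path_image g \<subseteq> {w. 2 * (d / 4) < infdist w K}"
    proof
      fix x assume "x \<in> path_image g"
      then have "d \<le> infdist x K"
        using d(2) K(2) by (simp add: infdist_notempty cINF_greatest)
      then show "x \<in> {w. 2 * (d / 4) < infdist w K}"
        using d(1) by simp
    qed
    then have "a \<in> C (d / 4)"
      unfolding C_def using g connected_path_image
      by (metis connected_componentI mem_Collect_eq pathfinish_in_path_image pathstart_in_path_image)
    with d(1) show ?thesis
      by (intro exI[of _ "d / 4"]) auto
  qed
  then obtain \<delta>a where \<delta>a: "\<And>a. a \<in> insert z L \<Longrightarrow> 0 < \<delta>a a \<and> a \<in> C (\<delta>a a)"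
    by metis
  have "insert z L \<subseteq> (\<Union>a\<in>insert z L. C (\<delta>a a))"
    using \<delta>a by blast
  then obtain A where A: "A \<subseteq> insert z L" "finite A" "insert z L \<subseteq> (\<Union>a\<in>A. C (\<delta>a a))"
    using compactE_image[OF compact_insert[OF L(1)] C_open] by metis
  then have "A \<noteq> {}"
    by auto
  define \<delta> where "\<delta> = Min (\<delta>a ` A)"
  have "0 < \<delta>"
    unfolding \<delta>_def using A \<open>A \<noteq> {}\<close> \<delta>a by (subst Min_gr_iff) auto
  moreover have "C (\<delta>a a) \<subseteq> C \<delta>" if "a \<in> A" for a
    unfolding \<delta>_def using A(2) that by (intro C_antimono Min_le) auto
  then have "insert z L \<subseteq> C \<delta>"
    using A(3) by blast
  ultimately show ?thesis
    using that[of \<delta> "C \<delta>"] C_open C_dist unfolding C_def by auto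
qed

definition near_factor :: "complex set \<Rightarrow> complex poly \<Rightarrow> complex poly" where
  "near_factor U q = poly_of_roots (filter (\<lambda>x. x \<in> U) (root_list q))"

definition far_factor :: "complex set \<Rightarrow> complex poly \<Rightarrow> complex poly" where
  "far_factor U q = poly_of_roots (filter (\<lambda>x. x \<notin> U) (root_list q))"

text \<open>For \<open>U\<close> a neighbourhood of \<open>K\<close>, this is \<open>q' / (n q)\<close> times the factor of \<open>q\<close> formed by
  its zeros outside \<open>U\<close>, of which there are boundedly many.\<close>

definition deriv_quotient :: "complex set \<Rightarrow> complex poly \<Rightarrow> complex \<Rightarrow> complex" where
  "deriv_quotient U q z =
     poly (pderiv q) z / (lead_coeff q * of_nat (degree q) * poly (near_factor U q) z)"

lemma near_far_factor: "q = smult (lead_coeff q) (near_factor U q * far_factor U q)"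
  unfolding near_factor_def far_factor_def
  using poly_of_root_list poly_of_roots_filter by metis

lemma poly_near_factor_eq_0_iff: "poly (near_factor U q) z = 0 \<longleftrightarrow> z \<in> U \<and> z \<in> set (root_list q)"
  by (auto simp: near_factor_def poly_of_roots_eq_0_iff)

lemma holomorphic_deriv_quotient_factor:
  assumes "W \<inter> U = {}"
  shows "(\<lambda>z. 1 / (lead_coeff q * of_nat (degree q) * poly (near_factor U q) z)) holomorphic_on W"
proof (cases "lead_coeff q * of_nat (degree q) = 0")
  case True
  then show ?thesis
    by (simp only: mult_zero_left division_ring_divide_zero holomorphic_on_const)
next
  case False
  then show ?thesis
    using assms by (intro holomorphic_intros) (auto simp: poly_near_factor_eq_0_iff)
qed

lemma deriv_quotient_eq:
  assumes "poly (near_factor U q) z \<noteq> 0" and "1 \<le> degree q"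
  shows "deriv_quotient U q z = (poly (pderiv (far_factor U q)) z
      + poly (far_factor U q) z * (\<Sum>x\<leftarrow>filter (\<lambda>x. x \<in> U) (root_list q). 1 / (z - x)))
      / of_nat (degree q)"
proof -
  define P where "P = near_factor U q"
  define Q where "Q = far_factor U q"
  have "poly (pderiv P) z = poly P z * (\<Sum>x\<leftarrow>filter (\<lambda>x. x \<in> U) (root_list q). 1 / (z - x))"
    using assms(1) unfolding P_def near_factor_def by (rule poly_pderiv_poly_of_roots)
  moreover have "poly (pderiv q) z
      = lead_coeff q * (poly P z * poly (pderiv Q) z + poly Q z * poly (pderiv P) z)"
    by (subst near_far_factor[of q U]) (simp add: P_def Q_def pderiv_smult pderiv_mult)
  moreover have "lead_coeff q \<noteq> 0"
    using assms(2) by auto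
  ultimately show ?thesis
    using assms unfolding deriv_quotient_def P_def[symmetric] Q_def[symmetric]
    by (simp add: field_simps)
qed

lemma norm_far_factor_le:
  fixes R T :: real
  assumes q: "q \<noteq> 0" and roots: "\<And>x. poly q x = 0 \<Longrightarrow> cmod x < R"
    and z: "cmod z \<le> T" and B: "1 \<le> T + R + 1" and M: "zero_count q (- U) \<le> M"
  shows "cmod (poly (far_factor U q) z) \<le> (T + R + 1) ^ M"
    and "cmod (poly (pderiv (far_factor U q)) z) \<le> M * (T + R + 1) ^ M"
proof -
  define far where "far = filter (\<lambda>x. x \<notin> U) (root_list q)"
  have far_B: "cmod (z - x) \<le> T + R + 1" if "x \<in> set far" for x
    using roots[of x] that set_root_list[OF q] norm_triangle_ineq4[of z x] z by (auto simp: far_def)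
  have far_M: "length far \<le> M"
    using M zero_count_eq_length_filter[OF q, of "- U"] by (simp add: far_def)
  show "cmod (poly (far_factor U q) z) \<le> (T + R + 1) ^ M"
    using norm_poly_of_roots_le[of far, OF far_B] power_increasing[OF far_M B]
    unfolding far_factor_def far_def[symmetric] by linarith
  have "cmod (poly (pderiv (far_factor U q)) z) \<le> length far * (T + R + 1) ^ length far"
    unfolding far_factor_def far_def[symmetric] by (rule norm_pderiv_poly_of_roots_le[OF far_B B])
  also have "\<dots> \<le> M * (T + R + 1) ^ M"
    using far_M B by (intro mult_mono power_increasing) auto
  finally show "cmod (poly (pderiv (far_factor U q)) z) \<le> M * (T + R + 1) ^ M" .
qed

lemma norm_deriv_quotient_le:
  fixes R T \<delta> :: real
  assumes n: "1 \<le> degree q" and roots: "\<And>x. poly q x = 0 \<Longrightarrow> cmod x < R"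
    and \<delta>: "0 < \<delta>" and z: "\<And>x. x \<in> U \<Longrightarrow> \<delta> < cmod (z - x)" "cmod z \<le> T"
    and M: "zero_count q (- U) \<le> M"
  shows "cmod (deriv_quotient U q z) \<le> (T + R + 1) ^ M / \<delta> + M * (T + R + 1) ^ M"
proof -
  define B where "B = T + R + 1"
  define near where "near = filter (\<lambda>x. x \<in> U) (root_list q)"
  have q: "q \<noteq> 0"
    using n by auto
  have "0 \<le> T"
    using z(2) norm_ge_zero[of z] by linarith
  then have B1: "1 \<le> B"
    using roots_bound_pos[OF n roots] by (simp add: B_def)
  have Q: "cmod (poly (far_factor U q) z) \<le> B ^ M"
    and Q': "cmod (poly (pderiv (far_factor U q)) z) \<le> M * B ^ M"
    using norm_far_factor_le[OF q roots z(2) _ M] B1 unfolding B_def by auto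
  have S: "cmod (\<Sum>x\<leftarrow>near. 1 / (z - x)) \<le> degree q * (1 / \<delta>)"
  proof -
    have "cmod (\<Sum>x\<leftarrow>near. 1 / (z - x)) \<le> length near * (1 / \<delta>)"
    proof (rule norm_sum_list_le)
      fix x assume "x \<in> set near"
      then have "\<delta> < cmod (z - x)"
        using z(1) by (simp add: near_def)
      then show "cmod (1 / (z - x)) \<le> 1 / \<delta>"
        using \<delta> by (simp add: norm_divide divide_simps)
    qed
    also have "\<dots> \<le> degree q * (1 / \<delta>)"
      using \<delta> length_filter_le[of "\<lambda>x. x \<in> U" "root_list q"]
      by (intro mult_right_mono) (auto simp: near_def length_root_list)
    finally show ?thesis .
  qed
  have "poly (near_factor U q) z \<noteq> 0"
    using z(1)[of z] \<delta> by (auto simp: poly_near_factor_eq_0_iff)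
  then have "cmod (deriv_quotient U q z) = cmod (poly (pderiv (far_factor U q)) z
      + poly (far_factor U q) z * (\<Sum>x\<leftarrow>near. 1 / (z - x))) / degree q"
    using deriv_quotient_eq[OF _ n] by (simp add: near_def norm_divide)
  also have "\<dots> \<le> (M * B ^ M + B ^ M * (degree q * (1 / \<delta>))) / degree q"
  proof (rule divide_right_mono)
    let ?A = "poly (pderiv (far_factor U q)) z" and ?P = "poly (far_factor U q) z"
      and ?S = "\<Sum>x\<leftarrow>near. 1 / (z - x)"
    have "cmod ?P * cmod ?S \<le> B ^ M * (degree q * (1 / \<delta>))"
      using Q S B1 by (intro mult_mono) auto
    moreover have "cmod (?A + ?P * ?S) \<le> cmod ?A + cmod ?P * cmod ?S"
      by (metis norm_mult norm_triangle_ineq)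
    ultimately show "cmod (?A + ?P * ?S) \<le> M * B ^ M + B ^ M * (degree q * (1 / \<delta>))"
      using Q' by linarith
  qed simp
  also have "\<dots> = M * B ^ M / degree q + B ^ M / \<delta>"
    using n by (simp add: field_simps)
  also have "\<dots> \<le> M * B ^ M + B ^ M / \<delta>"
    using n B1 divide_left_mono[of 1 "degree q" "M * B ^ M"] by simp
  finally show ?thesis
    by (simp add: B_def)
qed

lemma norm_deriv_quotient_ge:
  assumes n: "1 \<le> degree q" and roots: "\<And>x. poly q x = 0 \<Longrightarrow> cmod x < R"
    and z: "3 * R \<le> cmod z" "R + 1 \<le> cmod z"
  shows "1 / (2 * cmod z) \<le> cmod (deriv_quotient U q z)"
proof -
  define S where "S = (\<Sum>x\<leftarrow>root_list q. 1 / (z - x))"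
  have q: "q \<noteq> 0"
    using n by auto
  have root_R: "cmod x < R" if "x \<in> set (root_list q)" for x
    using roots that set_root_list[OF q] by auto
  have R: "0 < R"
    using n roots by (rule roots_bound_pos)
  have qz: "poly q z \<noteq> 0"
    using roots z R by fastforce
  then have "poly (near_factor U q) z \<noteq> 0"
    by (auto simp: poly_near_factor_eq_0_iff set_root_list[OF q])
  moreover have "poly q z = lead_coeff q * (poly (near_factor U q) z * poly (far_factor U q) z)"
    by (subst near_far_factor[of q U]) simp
  ultimately have eq: "deriv_quotient U q z = poly (far_factor U q) z * S / of_nat (degree q)"
    using poly_pderiv_eq_sum_root_list[OF qz] q
    by (simp add: deriv_quotient_def S_def field_simps)
  have far: "1 \<le> cmod (poly (far_factor U q) z)"
  proof -
    have "1 ^ length (filter (\<lambda>x. x \<notin> U) (root_list q)) \<le> cmod (poly (far_factor U q) z)"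
      unfolding far_factor_def
    proof (rule norm_poly_of_roots_ge)
      fix x assume "x \<in> set (filter (\<lambda>x. x \<notin> U) (root_list q))"
      then have "cmod x < R"
        using root_R by simp
      then show "1 \<le> cmod (z - x)"
        using norm_triangle_ineq2[of z x] z by linarith
    qed simp
    then show ?thesis
      by simp
  qed
  have sum: "degree q / (2 * cmod z) \<le> cmod S"
    unfolding S_def using norm_sum_inverse_ge[of "root_list q", OF root_R z(1) R] by (simp add: length_root_list)
  have "1 * (degree q / (2 * cmod z)) / degree q \<le> cmod (poly (far_factor U q) z) * cmod S / degree q"
    using far sum by (intro divide_right_mono mult_mono) auto
  also have "\<dots> = cmod (deriv_quotient U q z)"
    by (simp add: eq norm_mult norm_divide)
  finally show ?thesis
    using n by simp
qed

lemma frequently_zero_count_pderiv_bounded_on: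
  fixes q :: "nat \<Rightarrow> complex poly" and R \<delta> :: real
  assumes W: "open W" "connected W" and L: "compact L" "L \<subseteq> W"
    and z: "z \<in> W" "3 * R \<le> cmod z" "R + 1 \<le> cmod z" and R: "0 < R"
    and deg: "\<And>k. 1 \<le> degree (q k)" and roots: "\<And>k x. poly (q k) x = 0 \<Longrightarrow> cmod x < R"
    and \<delta>: "0 < \<delta>" and W_U: "\<And>w x. w \<in> W \<Longrightarrow> x \<in> U \<Longrightarrow> \<delta> < cmod (w - x)"
    and M0: "\<And>k. zero_count (q k) (- U) \<le> M0"
  shows "\<exists>M. \<exists>\<^sub>F k in sequentially. zero_count (pderiv (q k)) L \<le> M"
proof -
  have "w \<notin> U" if "w \<in> W" for w
    using W_U[OF that, of w] \<delta> by auto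
  then have "W \<inter> U = {}"
    by blast
  define h where "h k w = 1 / (lead_coeff (q k) * of_nat (degree (q k)) * poly (near_factor U (q k)) w)"
    for k w
  have quotient: "poly (pderiv (q k)) w * h k w = deriv_quotient U (q k) w" for k w
    by (simp add: h_def deriv_quotient_def)
  show ?thesis
  proof (rule frequently_zero_count_bounded[OF W L z(1)])
    show "pderiv (q k) \<noteq> 0" for k
      using deg[of k] by (auto simp: pderiv_eq_0_iff)
    show "h k holomorphic_on W" for k
      unfolding h_def using \<open>W \<inter> U = {}\<close> by (rule holomorphic_deriv_quotient_factor)
    show "\<exists>B. \<forall>k. \<forall>w\<in>C. cmod (poly (pderiv (q k)) w * h k w) \<le> B"
      if "compact C" "C \<subseteq> W" for C
    proof -
      obtain T where T: "\<And>w. w \<in> C \<Longrightarrow> cmod w \<le> T"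
        using compact_imp_bounded[OF \<open>compact C\<close>] by (auto simp: bounded_iff)
      have "cmod (poly (pderiv (q k)) w * h k w) \<le> (T + R + 1) ^ M0 / \<delta> + M0 * (T + R + 1) ^ M0"
        if "w \<in> C" for k w
      proof -
        have "w \<in> W"
          using that \<open>C \<subseteq> W\<close> by blast
        show ?thesis
          unfolding quotient
          by (rule norm_deriv_quotient_le[OF deg roots \<delta> W_U[OF \<open>w \<in> W\<close>] T[OF that] M0])
      qed
      then show ?thesis
        by blast
    qed
    show "1 / (2 * cmod z) \<le> cmod (poly (pderiv (q k)) z * h k z)" for k
      unfolding quotient using deg roots z(2,3) by (rule norm_deriv_quotient_ge)
    have "0 < cmod z"
      using R z(3) by linarith
    then show "0 < 1 / (2 * cmod z)"
      by simp
  qed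
qed

lemma frequently_zero_count_pderiv_bounded:
  fixes q :: "nat \<Rightarrow> complex poly" and R :: real
  assumes K: "compact K" "K \<noteq> {}" and pc: "polynomially_convex K"
    and deg: "\<And>k. 1 \<le> degree (q k)" and roots: "\<And>k x. poly (q k) x = 0 \<Longrightarrow> cmod x < R"
    and centered: "\<And>L. closed L \<Longrightarrow> L \<inter> K = {} \<Longrightarrow> \<exists>M. \<forall>k. zero_count (q k) L \<le> M"
    and L: "closed L" "L \<inter> K = {}"
  shows "\<exists>M. \<exists>\<^sub>F k in sequentially. zero_count (pderiv (q k)) L \<le> M"
proof -
  have R: "0 < R"
    using deg[of 0] roots by (rule roots_bound_pos)
  obtain BK where BK: "\<And>y. y \<in> K \<Longrightarrow> cmod y \<le> BK"
    using compact_imp_bounded[OF K(1)] by (auto simp: bounded_iff)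
  define z where "z = complex_of_real (max (max (3 * R) (R + 1)) (BK + 1))"
  have z: "3 * R \<le> cmod z" "R + 1 \<le> cmod z" "z \<notin> K"
    using R BK[of z] by (auto simp: z_def)
  define L' where "L' = L \<inter> cball 0 R"
  have L': "compact L'" "L' \<inter> K = {}"
    using L by (auto simp: L'_def compact_Int_closed)
  obtain \<delta> W where \<delta>: "0 < \<delta>" and W: "open W" "connected W" "L' \<subseteq> W" "z \<in> W"
    and W_far: "\<And>w y. w \<in> W \<Longrightarrow> y \<in> K \<Longrightarrow> 2 * \<delta> < dist w y"
    using polynomially_convex_connected_nbhd[OF K pc L' z(3)] by blast
  define U where "U = (\<Union>y\<in>K. ball y \<delta>)"
  have "closed (- U)"
    by (auto simp: U_def)
  moreover have "- U \<inter> K = {}"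
    using \<delta> by (force simp: U_def)
  ultimately obtain M0 where M0: "\<And>k. zero_count (q k) (- U) \<le> M0"
    using centered by blast
  have W_U: "\<delta> < cmod (w - x)" if "w \<in> W" "x \<in> U" for w x
  proof -
    obtain y where "y \<in> K" "dist x y < \<delta>"
      using \<open>x \<in> U\<close> by (auto simp: U_def dist_commute)
    moreover have "2 * \<delta> < dist w y"
      using W_far \<open>w \<in> W\<close> \<open>y \<in> K\<close> by blast
    moreover have "dist w y \<le> dist w x + dist x y"
      by (rule dist_triangle)
    ultimately show ?thesis
      by (simp add: dist_norm)
  qed
  have "\<exists>M. \<exists>\<^sub>F k in sequentially. zero_count (pderiv (q k)) L' \<le> M"
    by (rule frequently_zero_count_pderiv_bounded_on[OF W(1,2) L'(1) W(3,4) z(1,2) R deg roots \<delta> W_U M0])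
  moreover have "zero_count (pderiv (q k)) L = zero_count (pderiv (q k)) L'" for k
  proof -
    have "x \<in> cball 0 R" if "poly (pderiv (q k)) x = 0" for x
      using pderiv_zero_in_ball[OF deg[of k] roots[of k] that] by simp
    then have "{x\<in>L. poly (pderiv (q k)) x = 0} = {x\<in>L'. poly (pderiv (q k)) x = 0}"
      unfolding L'_def by blast
    then show ?thesis
      by (simp add: zero_count_def)
  qed
  ultimately show ?thesis
    by simp
qed

lemma centers_on_pderiv:
  fixes K :: "complex set" and q :: "nat \<Rightarrow> complex poly"
  assumes K: "compact K" "K \<noteq> {}" and pc: "polynomially_convex K"
    and deg: "filterlim (\<lambda>k. degree (q k)) at_top sequentially"
    and cen: "centers_on q K"
  shows "centers_on (\<lambda>k. pderiv (q k)) K"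
proof -
  obtain R k0 where R: "0 < R"
    and roots: "\<forall>k\<ge>k0. q k \<noteq> 0 \<and> (\<forall>x. poly (q k) x = 0 \<longrightarrow> cmod x < R)"
    and centered: "\<forall>L. closed L \<and> L \<inter> K = {} \<longrightarrow> (\<exists>M. \<forall>k\<ge>k0. zero_count (q k) L \<le> M)"
    using cen unfolding centers_on_def by blast
  obtain N where N: "\<And>k. k \<ge> N \<Longrightarrow> 1 \<le> degree (q k)"
    using deg unfolding filterlim_at_top eventually_sequentially by blast
  define k1 where "k1 = max N k0"
  have k1: "k0 \<le> k1" "\<And>k. k \<ge> k1 \<Longrightarrow> 1 \<le> degree (q k)"
    using N unfolding k1_def by simp_all
  have pderiv_roots: "pderiv (q k) \<noteq> 0 \<and> (\<forall>x. poly (pderiv (q k)) x = 0 \<longrightarrow> cmod x < R)"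
    if "k \<ge> k1" for k
  proof -
    have n: "1 \<le> degree (q k)"
      using k1(2) that by blast
    moreover have "k0 \<le> k"
      using k1(1) that by linarith
    then have "\<And>x. poly (q k) x = 0 \<Longrightarrow> cmod x < R"
      using roots by blast
    ultimately show ?thesis
      using pderiv_zero_in_ball[of "q k" R] by (auto simp: pderiv_eq_0_iff)
  qed
  have "\<exists>M. \<forall>k\<ge>k1. zero_count (pderiv (q k)) L \<le> M" if L: "closed L" "L \<inter> K = {}" for L
  proof (rule ccontr)
    assume "\<not> (\<exists>M. \<forall>k\<ge>k1. zero_count (pderiv (q k)) L \<le> M)"
    then have "\<forall>n. \<exists>k. k1 \<le> k \<and> n < zero_count (pderiv (q k)) L"
      by (auto simp: not_le)
    then obtain s where s: "\<And>n. k1 \<le> s n" "\<And>n. n < zero_count (pderiv (q (s n))) L"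
      by (metis choice)
    have "\<exists>M. \<exists>\<^sub>F n in sequentially. zero_count (pderiv (q (s n))) L \<le> M"
    proof (rule frequently_zero_count_pderiv_bounded[OF K pc _ _ _ L])
      have s0: "k0 \<le> s n" for n
        using k1(1) s(1) le_trans by blast
      show "1 \<le> degree (q (s n))" for n
        using k1(2) s(1) by blast
      show "poly (q (s n)) x = 0 \<Longrightarrow> cmod x < R" for n x
        using roots s0[of n] by blast
      show "\<exists>M. \<forall>n. zero_count (q (s n)) L' \<le> M" if L': "closed L'" "L' \<inter> K = {}" for L'
      proof -
        obtain M where "\<forall>k\<ge>k0. zero_count (q k) L' \<le> M"
          using centered L' by blast
        then show ?thesis
          using s0 by blast
      qed
    qed
    then obtain M where "\<exists>\<^sub>F n in sequentially. zero_count (pderiv (q (s n))) L \<le> M"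
      by blast
    then have "\<exists>\<^sub>F n in sequentially. zero_count (pderiv (q (s n))) L \<le> M \<and> M < n"
      by (rule frequently_eventually_frequently) (rule eventually_gt_at_top)
    then have "\<exists>\<^sub>F n in sequentially. False"
    proof (rule frequently_elim1)
      show "False" if "zero_count (pderiv (q (s n))) L \<le> M \<and> M < n" for n
        using that s(2)[of n] by linarith
    qed
    then show False
      by simp
  qed
  with R pderiv_roots show ?thesis
    unfolding centers_on_def by blast
qed

lemma centers_on_higher_pderiv:
  fixes K :: "complex set" and q :: "nat \<Rightarrow> complex poly"
  assumes "compact K" "K \<noteq> {}" "polynomially_convex K"
    and "filterlim (\<lambda>k. degree (q k)) at_top sequentially"
    and "centers_on q K"
  shows "filterlim (\<lambda>k. degree ((pderiv ^^ m) (q k))) at_top sequentially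
    \<and> centers_on (\<lambda>k. (pderiv ^^ m) (q k)) K"
proof (induction m)
  case (Suc m)
  have "filterlim (\<lambda>k. degree ((pderiv ^^ m) (q k)) - 1) at_top sequentially"
    using filterlim_compose[OF filterlim_minus_const_nat_at_top] Suc.IH by blast
  with Suc.IH show ?case
    using centers_on_pderiv[OF assms(1-3)] by (simp add: degree_pderiv)
qed (use assms in simp)

theorem theoremA:
  fixes K :: "complex set" and q :: "nat \<Rightarrow> complex poly"
  assumes "compact K" and "K \<noteq> {}" and "polynomially_convex K"
    and "filterlim (\<lambda>k. degree (q k)) at_top sequentially"
    and "centers_on q K"
    and "m \<ge> 1"
  shows "centers_on (\<lambda>k. (pderiv ^^ m) (q k)) K"
  using centers_on_higher_pderiv[OF assms(1-5)] by blast

end
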